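(* Consider the fixed cost inverse fractional knapsack problem (defined in the context), and let $$L=\max_{i\in I^0}\frac{p_i-\bar z_i}{c_i},\qquad U=\min_{i\in I^1}\frac{p_i+\bar z_i}{c_i},$$ where $\bar z_i=\bar u_i$ for $i\in I^1$ and $\bar z_i=\bar v_i$ for $i\in I^0$. Then the problem is feasible (i.e., there exists a feasible modification making $x^*$ optimal) if and only if $L\le U$.
   Context: Given positive integers $p_i,c_i$ ($i=1,\dots,n$), a budget $b$, and a vector $x^*\in\{0,1\}^n$ with $\sum_{i=1}^n c_i x^*_i=b$. Let $I^1=\{i:x^*_i=1\}$ and $I^0=\{i:x^*_i=0\}$. Given nonnegative integer bounds $\bar u_i,\bar v_i$. A feasible modification is $(u,v)$ with $u_i\in[0,\bar u_i]\cap\mathbb Z$, $v_i\in[0,\bar v_i]\cap\mathbb Z$, giving modified profits $\tilde p_i=p_i+u_i-v_i$; the costs $c_i$ are fixed. The fixed cost inverse fractional knapsack problem asks for a feasible modification such that $x^*$ is an optimal solution of $\max\{\sum_i\tilde p_i x_i:\sum_i c_ix_i\le b,\ x_i\in[0,1]\}$, minimizing a nondecreasing cost of the modification. *)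

theory Defs
  imports Main "HOL-Library.Extended_Real"
begin

definition frac_feasible :: "nat \<Rightarrow> (nat \<Rightarrow> int) \<Rightarrow> int \<Rightarrow> (nat \<Rightarrow> real) \<Rightarrow> bool" where
  "frac_feasible n c b x \<longleftrightarrow>
     (\<forall>i\<in>{1..n}. 0 \<le> x i \<and> x i \<le> 1) \<and> (\<Sum>i=1..n. real_of_int (c i) * x i) \<le> real_of_int b"

definition frac_optimal :: "nat \<Rightarrow> (nat \<Rightarrow> int) \<Rightarrow> (nat \<Rightarrow> int) \<Rightarrow> int \<Rightarrow> (nat \<Rightarrow> real) \<Rightarrow> bool" where
  "frac_optimal n pt c b x \<longleftrightarrow> frac_feasible n c b x \<and>
     (\<forall>y. frac_feasible n c b y \<longrightarrow>
        (\<Sum>i=1..n. real_of_int (pt i) * y i) \<le> (\<Sum>i=1..n. real_of_int (pt i) * x i))"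

definition feasible_modification :: "nat \<Rightarrow> (nat \<Rightarrow> int) \<Rightarrow> (nat \<Rightarrow> int) \<Rightarrow> (nat \<Rightarrow> int) \<Rightarrow> (nat \<Rightarrow> int) \<Rightarrow> bool" where
  "feasible_modification n ubar vbar u v \<longleftrightarrow>
     (\<forall>i\<in>{1..n}. 0 \<le> u i \<and> u i \<le> ubar i \<and> 0 \<le> v i \<and> v i \<le> vbar i)"

definition inverse_fk_feasible ::
  "nat \<Rightarrow> (nat \<Rightarrow> int) \<Rightarrow> (nat \<Rightarrow> int) \<Rightarrow> int \<Rightarrow> (nat \<Rightarrow> int) \<Rightarrow> (nat \<Rightarrow> int) \<Rightarrow> (nat \<Rightarrow> int) \<Rightarrow> bool" where
  "inverse_fk_feasible n p c b xstar ubar vbar \<longleftrightarrow>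
     (\<exists>u v. feasible_modification n ubar vbar u v \<and>
        frac_optimal n (\<lambda>i. p i + u i - v i) c b (\<lambda>i. real_of_int (xstar i)))"

definition I1 :: "nat \<Rightarrow> (nat \<Rightarrow> int) \<Rightarrow> nat set" where
  "I1 n xstar = {i\<in>{1..n}. xstar i = 1}"

definition I0 :: "nat \<Rightarrow> (nat \<Rightarrow> int) \<Rightarrow> nat set" where
  "I0 n xstar = {i\<in>{1..n}. xstar i = 0}"

text \<open>L = max over I0 of (p_i - vbar_i)/c_i, U = min over I1 of (p_i + ubar_i)/c_i,
  taken in the extended reals (max over the empty set is -infinity, min is +infinity).\<close>
definition lowerL :: "nat \<Rightarrow> (nat \<Rightarrow> int) \<Rightarrow> (nat \<Rightarrow> int) \<Rightarrow> (nat \<Rightarrow> int) \<Rightarrow> (nat \<Rightarrow> int) \<Rightarrow> ereal" where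
  "lowerL n p c xstar vbar =
     (SUP i\<in>I0 n xstar. ereal (real_of_int (p i - vbar i) / real_of_int (c i)))"

definition upperU :: "nat \<Rightarrow> (nat \<Rightarrow> int) \<Rightarrow> (nat \<Rightarrow> int) \<Rightarrow> (nat \<Rightarrow> int) \<Rightarrow> (nat \<Rightarrow> int) \<Rightarrow> ereal" where
  "upperU n p c xstar ubar =
     (INF i\<in>I1 n xstar. ereal (real_of_int (p i + ubar i) / real_of_int (c i)))"

end

theory Submission
  imports Defs
begin

text \<open>Necessity is an exchange argument: if an item i with x_i = 0 had a strictly larger
  profit-to-cost ratio than an item j with x_j = 1, moving cost from j to i would keep the
  solution feasible and increase the profit; together with the modification bounds this gives
  L \<le> U. Sufficiency: raise the profits on I^1 and lower them on I^0 as far as allowed; then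
  any threshold \<lambda> \<ge> 0 between the modified ratios of I^0 and of I^1 is a Lagrange multiplier
  for the budget constraint certifying the optimality of x^*.\<close>

lemma frac_optimal_ratio_le:
  fixes pt c :: "nat \<Rightarrow> int" and x :: "nat \<Rightarrow> real"
  assumes pos: "\<forall>k\<in>{1..n}. c k > 0"
    and opt: "frac_optimal n pt c b x"
    and i: "i \<in> {1..n}" "x i = 0" and j: "j \<in> {1..n}" "x j = 1"
  shows "real_of_int (pt i) / real_of_int (c i) \<le> real_of_int (pt j) / real_of_int (c j)"
proof -
  have ij: "i \<noteq> j" using i j by auto
  have ci: "real_of_int (c i) > 0" and cj: "real_of_int (c j) > 0" using pos i j by auto
  define s where "s = real_of_int (c i) + real_of_int (c j)"
  define a where "a = real_of_int (c j) / s"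
  have a01: "0 \<le> a" "a \<le> 1" using ci cj unfolding a_def s_def by (auto simp: field_simps)
  have a_scaled: "a * s = real_of_int (c j)" using ci cj unfolding a_def s_def by simp
  define y where "y k = x k + (if k = i then a else 0) + (if k = j then a - 1 else 0)" for k
  have sum_y: "(\<Sum>k=1..n. real_of_int (f k) * y k)
      = (\<Sum>k=1..n. real_of_int (f k) * x k) + real_of_int (f i) * a + real_of_int (f j) * (a - 1)"
    for f :: "nat \<Rightarrow> int"
  proof -
    have "(\<Sum>k=1..n. real_of_int (f k) * y k) = (\<Sum>k=1..n. real_of_int (f k) * x k)
      + (\<Sum>k=1..n. if k = i then real_of_int (f k) * a else 0)
      + (\<Sum>k=1..n. if k = j then real_of_int (f k) * (a - 1) else 0)"
      unfolding y_def sum.distrib[symmetric] by (intro sum.cong) (auto simp: algebra_simps)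
    then show ?thesis using i j by (simp add: sum.delta)
  qed
  have x_feasible: "frac_feasible n c b x" using opt unfolding frac_optimal_def by blast
  have "real_of_int (c i) * a + real_of_int (c j) * (a - 1) = 0"
    using a_scaled unfolding s_def by (simp add: algebra_simps)
  then have "(\<Sum>k=1..n. real_of_int (c k) * y k) = (\<Sum>k=1..n. real_of_int (c k) * x k)"
    using sum_y[of c] by simp
  moreover have "0 \<le> y k \<and> y k \<le> 1" if "k \<in> {1..n}" for k
    using that x_feasible i j ij a01 unfolding y_def frac_feasible_def by auto
  ultimately have "frac_feasible n c b y" using x_feasible unfolding frac_feasible_def by auto
  then have gain_nonpos: "real_of_int (pt i) * a + real_of_int (pt j) * (a - 1) \<le> 0"
    using opt sum_y[of pt] unfolding frac_optimal_def by auto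
  have "(real_of_int (pt i) * a + real_of_int (pt j) * (a - 1)) * s
      = real_of_int (pt i) * (a * s) - real_of_int (pt j) * (s - a * s)"
    by (simp add: algebra_simps)
  also have "\<dots> = real_of_int (pt i) * real_of_int (c j) - real_of_int (pt j) * real_of_int (c i)"
    using a_scaled by (simp add: s_def)
  finally have "real_of_int (pt i) * real_of_int (c j) - real_of_int (pt j) * real_of_int (c i) \<le> 0"
    using mult_nonpos_nonneg[OF gain_nonpos, of s] ci cj unfolding s_def by simp
  then show ?thesis using ci cj by (simp add: pos_divide_le_eq pos_le_divide_eq mult.commute)
qed

text \<open>Weak duality: \<lambda> is a multiplier for the budget constraint satisfying complementary
  slackness.\<close>

lemma frac_optimal_if_threshold:
  fixes pt c :: "nat \<Rightarrow> int" and x :: "nat \<Rightarrow> real" and lam :: real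
  assumes x_feasible: "frac_feasible n c b x"
    and tight: "(\<Sum>k=1..n. real_of_int (c k) * x k) = real_of_int b"
    and lam: "lam \<ge> 0"
    and below: "\<forall>k\<in>{1..n}. x k < 1 \<longrightarrow> real_of_int (pt k) \<le> lam * real_of_int (c k)"
    and above: "\<forall>k\<in>{1..n}. x k > 0 \<longrightarrow> lam * real_of_int (c k) \<le> real_of_int (pt k)"
  shows "frac_optimal n pt c b x"
  unfolding frac_optimal_def
proof (intro conjI allI impI x_feasible)
  fix y assume y_feasible: "frac_feasible n c b y"
  have slack: "lam * (real_of_int (c k) * (x k - y k)) \<le> real_of_int (pt k) * (x k - y k)"
    if k: "k \<in> {1..n}" for k
  proof (cases "y k \<le> x k")
    case True
    show ?thesis
    proof (cases "x k = y k")
      case False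
      moreover have "0 \<le> y k" using y_feasible k unfolding frac_feasible_def by blast
      ultimately have "lam * real_of_int (c k) \<le> real_of_int (pt k)" using True above k by auto
      with True show ?thesis by (auto simp: mult.assoc[symmetric] intro!: mult_right_mono)
    qed simp
  next
    case False
    moreover have "y k \<le> 1" using y_feasible k unfolding frac_feasible_def by blast
    ultimately have "real_of_int (pt k) \<le> lam * real_of_int (c k)" using below k by auto
    with False show ?thesis by (auto simp: mult.assoc[symmetric] intro!: mult_right_mono_neg)
  qed
  have "0 \<le> lam * (real_of_int b - (\<Sum>k=1..n. real_of_int (c k) * y k))"
    using lam y_feasible unfolding frac_feasible_def by simp
  also have "\<dots> = (\<Sum>k=1..n. lam * (real_of_int (c k) * (x k - y k)))"
    unfolding tight[symmetric] sum_subtractf[symmetric] sum_distrib_left by (simp add: algebra_simps)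
  also have "\<dots> \<le> (\<Sum>k=1..n. real_of_int (pt k) * (x k - y k))"
    using slack by (intro sum_mono) auto
  also have "\<dots> = (\<Sum>k=1..n. real_of_int (pt k) * x k) - (\<Sum>k=1..n. real_of_int (pt k) * y k)"
    by (simp add: sum_subtractf algebra_simps)
  finally show "(\<Sum>k=1..n. real_of_int (pt k) * y k) \<le> (\<Sum>k=1..n. real_of_int (pt k) * x k)"
    by simp
qed

lemma exists_nonneg_separating_value:
  fixes f g :: "'a \<Rightarrow> real"
  assumes "finite A" and "\<forall>a\<in>A. \<forall>b\<in>B. f a \<le> g b" and "\<forall>b\<in>B. 0 \<le> g b"
  shows "\<exists>lam \<ge> 0. (\<forall>a\<in>A. f a \<le> lam) \<and> (\<forall>b\<in>B. lam \<le> g b)"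
proof (intro exI conjI ballI)
  show "0 \<le> Max (insert 0 (f ` A))" using assms(1) by simp
  show "f a \<le> Max (insert 0 (f ` A))" if "a \<in> A" for a using assms(1) that by simp
  show "Max (insert 0 (f ` A)) \<le> g b" if "b \<in> B" for b
    using assms that by auto
qed

lemma lowerL_le_upperU_iff:
  "lowerL n p c xstar vbar \<le> upperU n p c xstar ubar \<longleftrightarrow>
   (\<forall>i\<in>I0 n xstar. \<forall>j\<in>I1 n xstar.
      real_of_int (p i - vbar i) / real_of_int (c i) \<le> real_of_int (p j + ubar j) / real_of_int (c j))"
  by (auto simp: lowerL_def upperU_def SUP_le_iff le_INF_iff)

lemma inverse_fk_feasible_imp_ratio_bounds:
  assumes pos: "\<forall>k\<in>{1..n}. c k > 0"
    and feasible: "inverse_fk_feasible n p c b xstar ubar vbar"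
    and i: "i \<in> I0 n xstar" and j: "j \<in> I1 n xstar"
  shows "real_of_int (p i - vbar i) / real_of_int (c i) \<le> real_of_int (p j + ubar j) / real_of_int (c j)"
proof -
  obtain u v where mod: "feasible_modification n ubar vbar u v"
    and opt: "frac_optimal n (\<lambda>k. p k + u k - v k) c b (\<lambda>k. real_of_int (xstar k))"
    using feasible unfolding inverse_fk_feasible_def by blast
  have i': "i \<in> {1..n}" "xstar i = 0" and j': "j \<in> {1..n}" "xstar j = 1"
    using i j unfolding I0_def I1_def by auto
  have ci: "real_of_int (c i) > 0" and cj: "real_of_int (c j) > 0" using pos i' j' by auto
  have mod_i: "v i \<le> vbar i" "0 \<le> u i" and mod_j: "u j \<le> ubar j" "0 \<le> v j"
    using mod i' j' unfolding feasible_modification_def by auto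
  have "real_of_int (p i - vbar i) / real_of_int (c i) \<le> real_of_int (p i + u i - v i) / real_of_int (c i)"
    using ci mod_i by (intro divide_right_mono) auto
  also have "\<dots> \<le> real_of_int (p j + u j - v j) / real_of_int (c j)"
    using frac_optimal_ratio_le[OF pos opt] i' j' by simp
  also have "\<dots> \<le> real_of_int (p j + ubar j) / real_of_int (c j)"
    using cj mod_j by (intro divide_right_mono) auto
  finally show ?thesis .
qed

lemma inverse_fk_feasible_if_ratio_bounds:
  assumes pos: "\<forall>k\<in>{1..n}. p k > 0 \<and> c k > 0"
    and binary: "\<forall>k\<in>{1..n}. xstar k \<in> {0, 1}"
    and tight: "(\<Sum>k=1..n. c k * xstar k) = b"
    and bounds: "\<forall>k\<in>{1..n}. ubar k \<ge> 0 \<and> vbar k \<ge> 0"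
    and ratios: "\<forall>i\<in>I0 n xstar. \<forall>j\<in>I1 n xstar.
      real_of_int (p i - vbar i) / real_of_int (c i) \<le> real_of_int (p j + ubar j) / real_of_int (c j)"
  shows "inverse_fk_feasible n p c b xstar ubar vbar"
proof -
  define u where "u k = (if xstar k = 1 then ubar k else 0)" for k
  define v where "v k = (if xstar k = 0 then vbar k else 0)" for k
  define r where "r k = real_of_int (p k + u k - v k) / real_of_int (c k)" for k
  have separated: "\<forall>i\<in>I0 n xstar. \<forall>j\<in>I1 n xstar. r i \<le> r j"
    using ratios by (auto simp: r_def u_def v_def I0_def I1_def)
  have nonneg: "\<forall>j\<in>I1 n xstar. 0 \<le> r j"
  proof
    fix j assume "j \<in> I1 n xstar"
    then have "j \<in> {1..n}" "xstar j = 1" unfolding I1_def by auto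
    then have "p j > 0" "c j > 0" "ubar j \<ge> 0" "u j = ubar j" "v j = 0"
      using pos bounds by (auto simp: u_def v_def)
    then show "0 \<le> r j" by (simp add: r_def)
  qed
  have "finite (I0 n xstar)" by (simp add: I0_def)
  then obtain lam where lam: "lam \<ge> 0"
    and below: "\<forall>i\<in>I0 n xstar. r i \<le> lam" and above: "\<forall>j\<in>I1 n xstar. lam \<le> r j"
    using exists_nonneg_separating_value[OF _ separated nonneg] by blast
  have "frac_optimal n (\<lambda>k. p k + u k - v k) c b (\<lambda>k. real_of_int (xstar k))"
  proof (rule frac_optimal_if_threshold[OF _ _ lam])
    have "(\<Sum>k=1..n. real_of_int (c k) * real_of_int (xstar k)) = real_of_int b"
      using arg_cong[OF tight, of real_of_int] by simp
    then show "frac_feasible n c b (\<lambda>k. real_of_int (xstar k))"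
      and "(\<Sum>k=1..n. real_of_int (c k) * real_of_int (xstar k)) = real_of_int b"
      using binary by (auto simp: frac_feasible_def)
    show "\<forall>k\<in>{1..n}. real_of_int (xstar k) < 1 \<longrightarrow> real_of_int (p k + u k - v k) \<le> lam * real_of_int (c k)"
    proof (intro ballI impI)
      fix k assume k: "k \<in> {1..n}" "real_of_int (xstar k) < 1"
      then have "k \<in> I0 n xstar" using binary[rule_format, of k] by (auto simp: I0_def)
      then have "r k \<le> lam" using below by blast
      moreover have "real_of_int (c k) > 0" using pos k by simp
      ultimately show "real_of_int (p k + u k - v k) \<le> lam * real_of_int (c k)"
        by (simp add: r_def pos_divide_le_eq)
    qed
    show "\<forall>k\<in>{1..n}. real_of_int (xstar k) > 0 \<longrightarrow> lam * real_of_int (c k) \<le> real_of_int (p k + u k - v k)"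
    proof (intro ballI impI)
      fix k assume k: "k \<in> {1..n}" "real_of_int (xstar k) > 0"
      then have "k \<in> I1 n xstar" using binary[rule_format, of k] by (auto simp: I1_def)
      then have "lam \<le> r k" using above by blast
      moreover have "real_of_int (c k) > 0" using pos k by simp
      ultimately show "lam * real_of_int (c k) \<le> real_of_int (p k + u k - v k)"
        by (simp add: r_def pos_le_divide_eq)
    qed
  qed
  moreover have "feasible_modification n ubar vbar u v"
    using bounds by (auto simp: feasible_modification_def u_def v_def)
  ultimately show ?thesis unfolding inverse_fk_feasible_def by blast
qed

theorem mainTheorem3:
  fixes n :: nat and p c ubar vbar xstar :: "nat \<Rightarrow> int" and b :: int
  assumes "\<forall>i\<in>{1..n}. p i > 0 \<and> c i > 0"
    and "\<forall>i\<in>{1..n}. xstar i \<in> {0, 1}"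
    and "(\<Sum>i=1..n. c i * xstar i) = b"
    and "\<forall>i\<in>{1..n}. ubar i \<ge> 0 \<and> vbar i \<ge> 0"
  shows "inverse_fk_feasible n p c b xstar ubar vbar \<longleftrightarrow>
         lowerL n p c xstar vbar \<le> upperU n p c xstar ubar"
proof
  assume "inverse_fk_feasible n p c b xstar ubar vbar"
  moreover have "\<forall>k\<in>{1..n}. c k > 0" using assms(1) by blast
  ultimately show "lowerL n p c xstar vbar \<le> upperU n p c xstar ubar"
    unfolding lowerL_le_upperU_iff using inverse_fk_feasible_imp_ratio_bounds by blast
next
  assume "lowerL n p c xstar vbar \<le> upperU n p c xstar ubar"
  then show "inverse_fk_feasible n p c b xstar ubar vbar"
    unfolding lowerL_le_upperU_iff by (rule inverse_fk_feasible_if_ratio_bounds[OF assms])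
qed

end
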